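(* For every $\epsilon>0$ there is $C_\epsilon$ (independent of $w$, $b$, $q$, $a$) such that for all $b\in Z(W)$, $q\ge1$ and $a$ coprime to $q$, $|S(q,a)|\le C_\epsilon q^{1/2+\epsilon}$. Moreover $S(q,a)=0$ whenever $\gcd(q,W)\nmid 2$ or $q=2$.
   Context: $W=8\prod_{2<p<w}p$ (product over primes) for a real parameter $w\ge3$. $[q]=\{1,\dots,q\}$, $[q]^*=\{a\in[q]:\gcd(a,q)=1\}$. $Z(W)=\{b\in[W]^*:b\equiv h^2\pmod W\text{ for some } h\}$; $H(b)=\{h\in[W]^*:h^2\equiv b\pmod W\}$, $H=|H(b)|$. $e(x)=e^{2\pi ix}$. $S(q,a)=\frac1H\sum_{h\in H(b)}e\big(\frac{(h^2-b)a}{qW}\big)\sum_{l\in[q],\ \gcd(Wl+h,qW)=1}e\big(\frac{(Wl^2+2hl)a}{q}\big)$. *)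

theory Defs
  imports "HOL-Analysis.Analysis" "HOL-Number_Theory.Number_Theory"
begin

definition ee :: "real \<Rightarrow> complex" where
  "ee x = exp (2 * pi * \<i> * complex_of_real x)"

definition WW :: "real \<Rightarrow> int" where
  "WW w = 8 * (\<Prod>p\<in>{p::nat. prime p \<and> 2 < p \<and> real p < w}. int p)"

definition Zset :: "int \<Rightarrow> int set" where
  "Zset W = {b \<in> {1..W}. coprime b W \<and> (\<exists>h::int. [h^2 = b] (mod W))}"

definition Hset :: "int \<Rightarrow> int \<Rightarrow> int set" where
  "Hset W b = {h \<in> {1..W}. coprime h W \<and> [h^2 = b] (mod W)}"

definition Ssum :: "int \<Rightarrow> int \<Rightarrow> int \<Rightarrow> int \<Rightarrow> complex" where
  "Ssum W b q a = (1 / of_nat (card (Hset W b))) *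
     (\<Sum>h\<in>Hset W b. ee (of_int ((h^2 - b) * a) / of_int (q * W)) *
        (\<Sum>l\<in>{l\<in>{1..q}. gcd (W * l + h) (q * W) = 1}.
            ee (of_int ((W * l^2 + 2 * h * l) * a) / of_int q)))"

end

theory Submission
  imports Defs
begin

(*
  Substituting m = W l + h turns the double sum defining S(q,a) into the sum of
  e((m^2 - b) a / (q W)) over the residues m mod q W that are coprime to q W and satisfy
  m^2 = b (mod W).

  If gcd(q, W) > 1 this sum vanishes: shifting m by q W / 4 (when q is even, using 8 | W)
  or by q W / p (when an odd prime p divides q and W) permutes these residues and multiplies
  each term by a nontrivial root of unity of order 2 resp. p, so averaging over the shifts
  kills the sum.

  If gcd(q, W) = 1, then for each square root h of b the map l |-> W l + h (mod q) is a
  bijection onto the units mod q, hence S(q,a) is the sum of e(a W^-1 (x^2 - b) / q) over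
  units x mod q. Inclusion-exclusion over the prime divisors of q writes this as a signed sum
  of 2^omega(q) quadratic sums over the multiples of some d | q, and squaring out shows each
  has modulus at most sqrt q. Finally 2^omega(q) is O(q^eps).
*)

section \<open>The additive character e\<close>

lemma ee_add: "ee (x + y) = ee x * ee y"
  unfolding ee_def by (simp add: distrib_left exp_add)

lemma ee_of_int [simp]: "ee (of_int n) = 1"
  unfolding ee_def using exp_2pi_1_int[of n] by (simp add: mult_ac)

lemma ee_add_of_int: "ee (x + of_int n) = ee x"
  by (simp add: ee_add)

lemma ee_eq_1_iff: "ee x = 1 \<longleftrightarrow> x \<in> \<int>"
proof
  assume "ee x = 1"
  then obtain n where "2 * pi * x = real_of_int (2 * n) * pi"
    unfolding ee_def exp_eq_1 by auto
  then show "x \<in> \<int>" by simp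
qed (auto elim: Ints_cases)

lemma norm_ee [simp]: "norm (ee x) = 1"
  unfolding ee_def by (simp add: norm_exp_eq_Re)

lemma cnj_ee: "cnj (ee x) = ee (- x)"
  unfolding ee_def by (simp add: exp_cnj)

lemma ee_power: "ee x ^ n = ee (of_nat n * x)"
  unfolding ee_def by (simp add: exp_of_nat_mult[symmetric] mult_ac)

lemma ee_cong:
  fixes x y n :: int
  assumes "[x = y] (mod n)" "n \<noteq> 0"
  shows "ee (of_int x / of_int n) = ee (of_int y / of_int n)"
proof -
  from assms(1) obtain t where "x = y + n * t"
    by (metis cong_iff_lin cong_sym)
  then have "of_int x / of_int n = of_int y / of_int n + (of_int t :: real)"
    using assms(2) by (simp add: field_simps)
  then show ?thesis by (simp add: ee_add_of_int)
qed

lemma sum_roots_of_unity: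
  fixes n :: nat and k :: int
  assumes "n > 0"
  shows "(\<Sum>j<n. ee (of_nat j * of_int k / of_nat n)) = (if int n dvd k then of_nat n else 0)"
proof (cases "int n dvd k")
  case True
  then obtain t where "k = int n * t" by auto
  then have "ee (of_nat j * of_int k / of_nat n) = 1" for j
    using assms ee_of_int[of "int j * t"] by simp
  then show ?thesis using True by simp
next
  case False
  define z where "z = ee (of_int k / of_nat n)"
  have powers: "ee (of_nat j * of_int k / of_nat n) = z ^ j" for j
    unfolding z_def ee_power by simp
  have "z \<noteq> 1"
  proof
    assume "z = 1"
    then obtain t where "of_int k / of_nat n = (of_int t :: real)"
      unfolding z_def ee_eq_1_iff by (auto elim: Ints_cases)
    then have "real_of_int k = real_of_int (int n * t)" using assms by (simp add: field_simps)
    then have "k = int n * t" by (simp only: of_int_eq_iff)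
    then show False using False by auto
  qed
  moreover have "z ^ n = 1" unfolding z_def ee_power using assms by simp
  ultimately show ?thesis using False by (simp add: powers geometric_sum)
qed

section \<open>Quadratic exponential sums\<close>

lemma sum_periodic_shift:
  fixes f :: "nat \<Rightarrow> 'a::ab_group_add"
  assumes periodic: "\<And>y. f (y mod n) = f y"
  shows "(\<Sum>t<n. f (z + t)) = (\<Sum>t<n. f t)"
proof (induction z)
  case (Suc z)
  have "f (z + n) = f z" using periodic[of "z + n"] periodic[of z] by simp
  then have "(\<Sum>t<n. f (Suc z + t)) = (\<Sum>t<n. f (z + t))"
    using sum.lessThan_Suc_shift[of "\<lambda>t. f (z + t)" n] by (simp add: algebra_simps)
  then show ?case using Suc.IH by simp
qed simp

lemma norm_gauss_sum_sq_le:
  fixes n :: nat and k :: int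
  assumes n: "n > 0"
  shows "norm (\<Sum>y<n. ee (of_int (k * int y ^ 2) / of_nat n)) ^ 2
           \<le> real n * real (card {t. t < n \<and> int n dvd 2 * k * int t})"
proof -
  define g where "g y = ee (of_int (k * int y ^ 2) / of_nat n)" for y
  define F where "F = (\<Sum>y<n. g y)"
  have periodic: "g (y mod n) = g y" for y
    unfolding g_def using n
    by (intro ee_cong[where n="int n", simplified])
       (auto simp: of_nat_mod cong_def, metis mod_mult_right_eq power_mod)
  have shifted: "g (z + t) * cnj (g z) = ee (of_int (k * int t ^ 2) / of_nat n) *
              ee (of_nat z * of_int (2 * k * int t) / of_nat n)" for z t
  proof -
    have "of_int (k * int (z + t) ^ 2) / of_nat n - of_int (k * int z ^ 2) / of_nat n
        = of_int (k * int t ^ 2) / of_nat n + of_nat z * of_int (2 * k * int t) / (of_nat n :: real)"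
      using n by (simp add: field_simps power2_eq_square)
    then show ?thesis
      unfolding g_def cnj_ee by (simp flip: ee_add)
  qed
  have "F * cnj F = (\<Sum>z<n. \<Sum>y<n. g y * cnj (g z))"
    unfolding F_def by (simp add: cnj_sum sum_distrib_left sum_distrib_right)
  also have "\<dots> = (\<Sum>z<n. \<Sum>t<n. g (z + t) * cnj (g z))"
    by (intro sum.cong refl sum_periodic_shift[symmetric]) (simp add: periodic)
  also have "\<dots> = (\<Sum>t<n. ee (of_int (k * int t ^ 2) / of_nat n) *
                     (\<Sum>z<n. ee (of_nat z * of_int (2 * k * int t) / of_nat n)))"
    by (subst sum.swap) (simp add: shifted sum_distrib_left)
  also have "\<dots> = (\<Sum>t<n. ee (of_int (k * int t ^ 2) / of_nat n) *
                     (if int n dvd 2 * k * int t then of_nat n else 0))"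
    by (simp only: sum_roots_of_unity[OF n])
  finally have F_sq: "F * cnj F = \<dots>" .
  have "norm F ^ 2 = norm (F * cnj F)" by (simp add: norm_mult power2_eq_square)
  also have "\<dots> \<le> (\<Sum>t<n. if int n dvd 2 * k * int t then real n else 0)"
    unfolding F_sq by (rule order_trans[OF norm_sum], intro sum_mono) (simp add: norm_mult)
  also have "\<dots> = real n * real (card {t. t < n \<and> int n dvd 2 * k * int t})"
    by (simp add: sum.If_cases Int_def lessThan_def conj_commute)
  finally show ?thesis unfolding F_def g_def .
qed

lemma card_multiples_le:
  fixes n d :: nat
  assumes n: "n > 0" and d: "d > 0"
  shows "card {t. t < n \<and> n dvd d * t} \<le> d"
proof -
  define g where "g = gcd n d"
  define m where "m = n div g"
  have g: "g > 0" "n = m * g" using n unfolding g_def m_def by simp_all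
  have coprime: "coprime m (d div g)" unfolding m_def g_def using div_gcd_coprime n by blast
  have multiple: "m dvd t" if "n dvd d * t" for t
  proof -
    have "d = d div g * g" unfolding g_def by simp
    then have "m * g dvd (d div g * t) * g" using that g(2) by (metis mult.assoc mult.commute)
    then have "m dvd d div g * t" using g by simp
    then show ?thesis using coprime by (simp add: coprime_dvd_mult_right_iff)
  qed
  have "{t. t < n \<and> n dvd d * t} \<subseteq> (\<lambda>j. m * j) ` {..<g}"
  proof
    fix t assume "t \<in> {t. t < n \<and> n dvd d * t}"
    then have "t < m * g" "m dvd t" using multiple g by auto
    then obtain j where "t = m * j" "j < g" by (auto elim!: dvdE)
    then show "t \<in> (\<lambda>j. m * j) ` {..<g}" by auto
  qed
  then have "card {t. t < n \<and> n dvd d * t} \<le> card ((\<lambda>j. m * j) ` {..<g})"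
    by (intro card_mono) auto
  also have "\<dots> \<le> g" using card_image_le[of "{..<g}" "\<lambda>j. m * j"] by simp
  also have "\<dots> \<le> d" unfolding g_def using d by simp
  finally show ?thesis .
qed

lemma norm_quadratic_sum_multiples_le:
  fixes q d :: nat and c :: int
  assumes q: "q > 0" and dq: "d dvd q" and odd: "odd q" and coprime: "coprime c (int q)"
  shows "norm (\<Sum>x | x < q \<and> d dvd x. ee (of_int (c * int x ^ 2) / of_nat q)) \<le> sqrt q"
proof -
  obtain n where qn: "q = d * n" using dq by auto
  have d: "d > 0" and n: "n > 0" using q qn by auto
  have multiples: "{x. x < q \<and> d dvd x} = (\<lambda>y. d * y) ` {..<n}"
    using qn d by (auto elim!: dvdE)
  have sum_eq: "(\<Sum>x | x < q \<and> d dvd x. ee (of_int (c * int x ^ 2) / of_nat q))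
      = (\<Sum>y<n. ee (of_int (c * int d * int y ^ 2) / of_nat n))"
    unfolding multiples using d n qn
    by (subst sum.reindex) (auto simp: inj_on_def power2_eq_square intro!: sum.cong arg_cong[of _ _ ee])
  moreover have card: "card {t. t < n \<and> int n dvd 2 * (c * int d) * int t} \<le> d"
  proof -
    have coprime_n: "coprime (int n) (2 * c)"
      using odd coprime qn by (auto simp: coprime_commute)
    have "n dvd d * t" if "int n dvd 2 * (c * int d) * int t" for t
    proof -
      have "int n dvd (2 * c) * int (d * t)" using that by (simp add: mult_ac)
      then have "int n dvd int (d * t)" using coprime_n by (simp add: coprime_dvd_mult_right_iff)
      then show ?thesis by (simp only: of_nat_dvd_iff)
    qed
    then have "{t. t < n \<and> int n dvd 2 * (c * int d) * int t} \<subseteq> {t. t < n \<and> n dvd d * t}"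
      by auto
    then have "card {t. t < n \<and> int n dvd 2 * (c * int d) * int t} \<le> card {t. t < n \<and> n dvd d * t}"
      by (intro card_mono) auto
    also have "\<dots> \<le> d" by (rule card_multiples_le[OF n d])
    finally show ?thesis .
  qed
  have "norm (\<Sum>y<n. ee (of_int (c * int d * int y ^ 2) / of_nat n)) ^ 2
      \<le> real n * real (card {t. t < n \<and> int n dvd 2 * (c * int d) * int t})"
    by (rule norm_gauss_sum_sq_le[OF n])
  also have "\<dots> \<le> real n * real d" using card by (intro mult_left_mono) auto
  also have "\<dots> = real q" using qn by simp
  finally show ?thesis using sum_eq by (simp add: real_le_rsqrt)
qed

lemma norm_quadratic_sum_sieved_le:
  fixes q d :: nat and c :: int
  assumes q: "q > 0" and odd: "odd q" and coprime: "coprime c (int q)"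
    and "finite P" and "\<forall>p\<in>P. prime p \<and> p dvd q"
    and "d dvd q" and "\<forall>p\<in>P. \<not> p dvd d"
  shows "norm (\<Sum>x | x < q \<and> d dvd x \<and> (\<forall>p\<in>P. \<not> p dvd x). ee (of_int (c * int x ^ 2) / of_nat q))
           \<le> 2 ^ card P * sqrt q"
  using assms(4-)
proof (induction P arbitrary: d rule: finite_induct)
  case empty
  then show ?case using norm_quadratic_sum_multiples_le[OF q _ odd coprime] by simp
next
  case (insert p P)
  let ?f = "\<lambda>x::nat. ee (of_int (c * int x ^ 2) / of_nat q)"
  let ?S = "\<lambda>d P. {x. x < q \<and> d dvd x \<and> (\<forall>p\<in>P. \<not> p dvd x)}"
  have p: "prime p" "p dvd q" "\<not> p dvd d" and P: "\<forall>p\<in>P. prime p \<and> p dvd q"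
    using insert.prems by auto
  have coprime_dp: "coprime d p" using p prime_imp_coprime coprime_commute by blast
  have "d * p dvd q" using insert.prems p coprime_dp by (auto intro: divides_mult)
  moreover have "\<forall>p'\<in>P. \<not> p' dvd d * p"
    using insert P p by (auto simp: prime_dvd_mult_iff dest: primes_dvd_imp_eq)
  ultimately have bound_dp: "norm (sum ?f (?S (d * p) P)) \<le> 2 ^ card P * sqrt q"
    using insert.IH[OF P] by blast
  have bound_d: "norm (sum ?f (?S d P)) \<le> 2 ^ card P * sqrt q"
    using insert.IH[OF P] insert.prems by auto
  have "?S d (insert p P) = ?S d P - ?S (d * p) P"
    using coprime_dp by (auto intro: divides_mult dest: dvd_mult_left dvd_mult_right)
  moreover have "?S (d * p) P \<subseteq> ?S d P" by (auto dest: dvd_mult_left)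
  ultimately have "sum ?f (?S d (insert p P)) = sum ?f (?S d P) - sum ?f (?S (d * p) P)"
    by (simp add: sum_diff)
  then have "norm (sum ?f (?S d (insert p P))) \<le> norm (sum ?f (?S d P)) + norm (sum ?f (?S (d * p) P))"
    by (simp add: norm_triangle_ineq4)
  also have "\<dots> \<le> 2 ^ card (insert p P) * sqrt q" using bound_d bound_dp insert.hyps by simp
  finally show ?case .
qed

lemma coprime_iff_no_common_prime_divisor:
  fixes x q :: nat
  shows "coprime x q \<longleftrightarrow> (\<forall>p. prime p \<and> p dvd q \<longrightarrow> \<not> p dvd x)"
proof
  assume "coprime x q"
  then show "\<forall>p. prime p \<and> p dvd q \<longrightarrow> \<not> p dvd x"
    using not_coprimeI not_prime_unit by blast
next
  assume no_common: "\<forall>p. prime p \<and> p dvd q \<longrightarrow> \<not> p dvd x"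
  show "coprime x q"
  proof (rule ccontr)
    assume "\<not> coprime x q"
    then obtain d where "d dvd x" "d dvd q" "\<not> is_unit d" by (rule not_coprimeE)
    moreover obtain p where "prime p" "p dvd d" using prime_factor_nat \<open>\<not> is_unit d\<close> by auto
    ultimately show False using no_common dvd_trans by blast
  qed
qed

lemma norm_quadratic_sum_units_le:
  fixes q :: nat and c :: int
  assumes q: "q > 0" and odd: "odd q" and coprime: "coprime c (int q)"
  shows "norm (\<Sum>x | x < q \<and> coprime x q. ee (of_int (c * int x ^ 2) / of_nat q))
           \<le> 2 ^ card {p. prime p \<and> p dvd q} * sqrt q"
proof -
  define P where "P = {p. prime p \<and> p dvd q}"
  have "{x. x < q \<and> coprime x q} = {x. x < q \<and> 1 dvd x \<and> (\<forall>p\<in>P. \<not> p dvd x)}"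
    unfolding P_def coprime_iff_no_common_prime_divisor by auto
  moreover have "finite P" unfolding P_def using q by (simp add: finite_prime_divisors)
  then have "norm (\<Sum>x | x < q \<and> 1 dvd x \<and> (\<forall>p\<in>P. \<not> p dvd x). ee (of_int (c * int x ^ 2) / of_nat q))
           \<le> 2 ^ card P * sqrt q"
    by (rule norm_quadratic_sum_sieved_le[OF q odd coprime]) (auto simp: P_def)
  ultimately show ?thesis unfolding P_def by simp
qed

section \<open>The number of prime divisors\<close>

lemma prod_prime_divisors_le:
  fixes q :: nat
  assumes q: "q > 0" and L: "L \<subseteq> {p. prime p \<and> p dvd q}"
  shows "(\<Prod>p\<in>L. p) \<le> q"
proof -
  define P where "P = {p. prime p \<and> p dvd q}"
  have "(\<Prod>p\<in>L. p) dvd (\<Prod>p\<in>P. p)"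
    using q L by (intro prod_dvd_prod_subset) (simp_all add: P_def finite_prime_divisors)
  also have "(\<Prod>p\<in>P. p) dvd (\<Prod>p\<in>P. p ^ multiplicity p q)"
    using q by (intro prod_dvd_prod dvd_power) (auto simp: P_def prime_multiplicity_gt_zero_iff)
  also have "\<dots> = q"
    using prod_prime_factors[of q] q by (simp add: P_def prime_factors_dvd)
  finally show ?thesis using q by (rule dvd_imp_le)
qed

lemma two_pow_card_prime_divisors_le:
  fixes \<epsilon> :: real
  assumes "\<epsilon> > 0"
  shows "\<exists>C>0. \<forall>q::nat. q > 0 \<longrightarrow> 2 ^ card {p. prime p \<and> p dvd q} \<le> C * real q powr \<epsilon>"
proof -
  \<comment> \<open>fewer than N primes lie below E, and every prime p \<ge> E has p powr \<epsilon> \<ge> 2\<close>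
  define E where "E = (2::real) powr (1 / \<epsilon>)"
  define N where "N = nat \<lceil>E\<rceil>"
  have "2 ^ card {p. prime p \<and> p dvd q} \<le> 2 ^ N * real q powr \<epsilon>" if q: "q > 0" for q :: nat
  proof -
    define P where "P = {p. prime p \<and> p dvd q}"
    define L where "L = {p\<in>P. E \<le> real p}"
    have "P - L \<subseteq> {..<N}"
      unfolding L_def N_def by (auto simp: not_less nat_le_iff ceiling_le_iff)
    then have "card (P - L) \<le> N" using card_mono[of "{..<N}" "P - L"] by simp
    moreover have "card (P - L) = card P - card L"
      using q by (intro card_Diff_subset) (auto simp: L_def P_def finite_prime_divisors)
    ultimately have card_P: "card P \<le> N + card L" by simp
    have "(2::real) ^ card L = (\<Prod>p\<in>L. E powr \<epsilon>)"
      unfolding E_def using assms by (simp add: powr_powr)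
    also have "\<dots> \<le> (\<Prod>p\<in>L. real p powr \<epsilon>)"
      unfolding L_def E_def using assms by (intro prod_mono) (auto intro: powr_mono2)
    also have "\<dots> = (\<Prod>p\<in>L. real p) powr \<epsilon>" by (simp add: prod_powr_distrib)
    also have "\<dots> \<le> real q powr \<epsilon>"
    proof (intro powr_mono2)
      have "(\<Prod>p\<in>L. p) \<le> q" using prod_prime_divisors_le[OF q, of L] by (auto simp: L_def P_def)
      then show "(\<Prod>p\<in>L. real p) \<le> real q" by (simp flip: of_nat_prod)
    qed (use assms in \<open>auto intro: prod_nonneg\<close>)
    finally have large: "(2::real) ^ card L \<le> real q powr \<epsilon>" .
    have "(2::real) ^ card P \<le> 2 ^ N * 2 ^ card L"
      using card_P by (simp flip: power_add)
    also have "\<dots> \<le> 2 ^ N * real q powr \<epsilon>" using large by simp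
    finally show ?thesis unfolding P_def .
  qed
  then show ?thesis by (intro exI[of _ "2 ^ N"]) auto
qed

section \<open>S(q,a) as a sum over residues modulo q W\<close>

definition Lset :: "int \<Rightarrow> int \<Rightarrow> int \<Rightarrow> int set" where
  "Lset W q h = {l\<in>{1..q}. gcd (W * l + h) (q * W) = 1}"

definition Sterm :: "int \<Rightarrow> int \<Rightarrow> int \<Rightarrow> int \<Rightarrow> int \<Rightarrow> complex" where
  "Sterm W b q a m = ee (of_int ((m^2 - b) * a) / of_int (q * W))"

definition Mset :: "int \<Rightarrow> int \<Rightarrow> int \<Rightarrow> int set" where
  "Mset W q b = {m\<in>{0..<q * W}. coprime m (q * W) \<and> [m^2 = b] (mod W)}"

lemma Sterm_mod:
  assumes "q * W \<noteq> 0"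
  shows "Sterm W b q a (m mod (q * W)) = Sterm W b q a m"
  unfolding Sterm_def
proof (rule ee_cong[OF _ assms])
  have "[(m mod (q * W))^2 = m^2] (mod (q * W))"
    by (intro cong_pow) (simp add: cong_def)
  then show "[((m mod (q * W))^2 - b) * a = (m^2 - b) * a] (mod q * W)"
    by (intro cong_mult cong_diff) auto
qed

lemma Ssum_eq_sum_Hset_Lset:
  assumes W: "W \<noteq> 0" and q: "q \<noteq> 0"
  shows "Ssum W b q a = 1 / of_nat (card (Hset W b)) *
     (\<Sum>h\<in>Hset W b. \<Sum>l\<in>Lset W q h. Sterm W b q a (W * l + h))"
proof -
  have "ee (of_int ((h^2 - b) * a) / of_int (q * W)) * ee (of_int ((W * l^2 + 2 * h * l) * a) / of_int q)
         = Sterm W b q a (W * l + h)" for h l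
  proof -
    have "((W * l + h)^2 - b) * a = (h^2 - b) * a + W * ((W * l^2 + 2 * h * l) * a)"
      by (simp add: power2_eq_square algebra_simps)
    then have "(of_int (((W * l + h)^2 - b) * a) / of_int (q * W) :: real)
        = of_int ((h^2 - b) * a) / of_int (q * W) + of_int ((W * l^2 + 2 * h * l) * a) / of_int q"
      using W q by (simp add: field_simps)
    then show ?thesis unfolding Sterm_def by (simp add: ee_add)
  qed
  then show ?thesis unfolding Ssum_def Lset_def by (simp add: sum_distrib_left)
qed

lemma Hset_memD:
  assumes "W > 1" and "h \<in> Hset W b"
  shows "0 < h" "h < W" "coprime h W" "[h^2 = b] (mod W)"
proof -
  show "0 < h" "coprime h W" "[h^2 = b] (mod W)" using assms(2) unfolding Hset_def by auto
  moreover have "h \<le> W" using assms(2) unfolding Hset_def by auto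
  ultimately show "h < W" using assms(1) by (cases "h = W") auto
qed

lemma finite_Hset: "finite (Hset W b)"
  unfolding Hset_def by (rule finite_subset[of _ "{1..W}"]) auto

lemma Hset_nonempty:
  assumes W: "W > 1" and b: "b \<in> Zset W"
  shows "Hset W b \<noteq> {}"
proof -
  from b obtain h0 where h0: "[h0^2 = b] (mod W)" and coprime_b: "coprime b W"
    unfolding Zset_def by auto
  define h where "h = h0 mod W"
  have "[h^2 = b] (mod W)"
    unfolding h_def using h0 by (metis cong_def power_mod)
  moreover from this have "coprime h W"
    using coprime_b W by (metis cong_def coprime_mod_left_iff coprime_power_left_iff
        not_one_less_zero zero_neq_numeral)
  moreover have "0 \<le> h" "h < W" unfolding h_def using W by simp_all
  moreover have "h \<noteq> 0" using \<open>coprime h W\<close> W by auto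
  ultimately have "h \<in> Hset W b" unfolding Hset_def by simp
  then show ?thesis by auto
qed

lemma shifted_mod_eq:
  fixes x l q :: int
  assumes "[x = l] (mod q)" "1 \<le> l" "l \<le> q"
  shows "(x - 1) mod q + 1 = l"
proof -
  have "(x - 1) mod q = (l - 1) mod q"
    using assms(1) cong_diff[OF _ cong_refl, of x l q 1] by (simp add: cong_def)
  then show ?thesis using assms(2,3) by simp
qed

lemma Hset_Lset_residue:
  assumes W: "W > 1" and q: "q > 0" and h: "h \<in> Hset W b" and l: "l \<in> Lset W q h"
  defines "m \<equiv> (W * l + h) mod (q * W)"
  shows "m \<in> Mset W q b" "m mod W = h" "(m div W - 1) mod q + 1 = l"
proof -
  have h_bounds: "0 < h" "h < W" and h_sq: "[h^2 = b] (mod W)"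
    using Hset_memD[OF W h] by auto
  have l_bounds: "1 \<le> l" "l \<le> q" and coprime_l: "coprime (W * l + h) (q * W)"
    using l unfolding Lset_def by (auto simp: coprime_iff_gcd_eq_1)
  define t where "t = (W * l + h) div (q * W)"
  have "W * l + h = q * W * t + m" unfolding m_def t_def by simp
  then have m_eq: "m = h + W * (l - q * t)" by (simp add: algebra_simps)
  show m_mod: "m mod W = h" using m_eq h_bounds by simp
  have "m div W = l - q * t" using m_eq h_bounds W by simp
  then show "(m div W - 1) mod q + 1 = l"
    using l_bounds by (intro shifted_mod_eq) (auto simp: cong_iff_dvd_diff)
  have "[m = h] (mod W)" using m_mod h_bounds by (simp add: cong_def)
  then have "[m^2 = h^2] (mod W)" by (rule cong_pow)
  then have "[m^2 = b] (mod W)" using h_sq by (rule cong_trans)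
  moreover have "coprime m (q * W)"
    unfolding m_def using coprime_l q W by (subst coprime_mod_left_iff) auto
  moreover have "0 \<le> m" "m < q * W" unfolding m_def using q W by simp_all
  ultimately show "m \<in> Mset W q b" unfolding Mset_def by simp
qed

lemma Mset_residue_decomp:
  assumes W: "W > 1" and q: "q > 0" and m: "m \<in> Mset W q b"
  defines "h \<equiv> m mod W" and "l \<equiv> (m div W - 1) mod q + 1"
  shows "h \<in> Hset W b" "l \<in> Lset W q h" "(W * l + h) mod (q * W) = m"
proof -
  have m_bounds: "0 \<le> m" "m < q * W" and coprime_m: "coprime m (q * W)"
    and m_sq: "[m^2 = b] (mod W)"
    using m unfolding Mset_def by auto
  have "l mod q = (m div W - 1 + 1) mod q" unfolding l_def by (rule mod_add_left_eq)
  then have "q dvd l - m div W" by (simp add: mod_eq_dvd_iff)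
  then have "q * W dvd W * (l - m div W)" by (simp add: mult.commute mult_dvd_mono)
  moreover have "W * l + h = W * (l - m div W) + m"
    unfolding h_def by (simp add: algebra_simps)
  ultimately have cong_m: "[W * l + h = m] (mod q * W)"
    by (simp add: cong_iff_dvd_diff)
  then show "(W * l + h) mod (q * W) = m" using m_bounds by (simp add: cong_def)
  have "coprime h W" unfolding h_def using coprime_m W by (subst coprime_mod_left_iff) auto
  moreover have "[h^2 = b] (mod W)"
    unfolding h_def using m_sq by (metis cong_def power_mod)
  moreover have "0 \<le> h" "h < W" unfolding h_def using W by simp_all
  moreover have "h \<noteq> 0" using \<open>coprime h W\<close> W by auto
  ultimately show "h \<in> Hset W b" unfolding Hset_def by simp
  have "coprime (W * l + h) (q * W)"
    using cong_imp_coprime[OF cong_sym[OF cong_m] coprime_m] .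
  moreover have "1 \<le> l" "l \<le> q"
    unfolding l_def using pos_mod_bound[OF q, of "m div W - 1"] pos_mod_sign[OF q, of "m div W - 1"]
    by linarith+
  ultimately show "l \<in> Lset W q h" unfolding Lset_def by (simp add: coprime_iff_gcd_eq_1)
qed

lemma sum_Hset_Lset_eq_sum_Mset:
  fixes f :: "int \<Rightarrow> 'a::comm_monoid_add"
  assumes W: "W > 1" and q: "q > 0" and periodic: "\<And>m. f (m mod (q * W)) = f m"
  shows "(\<Sum>h\<in>Hset W b. \<Sum>l\<in>Lset W q h. f (W * l + h)) = (\<Sum>m\<in>Mset W q b. f m)"
proof -
  have bij: "bij_betw (\<lambda>(h, l). (W * l + h) mod (q * W)) (Sigma (Hset W b) (Lset W q)) (Mset W q b)"
    by (rule bij_betw_byWitness[where f'="\<lambda>m. (m mod W, (m div W - 1) mod q + 1)"])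
       (auto simp: Hset_Lset_residue[OF W q] Mset_residue_decomp[OF W q])
  then have "(\<Sum>(h, l)\<in>Sigma (Hset W b) (Lset W q). f ((W * l + h) mod (q * W))) = (\<Sum>m\<in>Mset W q b. f m)"
    using sum.reindex_bij_betw[OF bij, of f] by (simp add: case_prod_unfold)
  moreover have "finite (Lset W q h)" for h
    unfolding Lset_def by (rule finite_subset[of _ "{1..q}"]) auto
  ultimately show ?thesis
    using finite_Hset by (simp add: sum.Sigma periodic)
qed

section \<open>Vanishing of S(q,a) when gcd(q, W) > 1\<close>

lemma coprime_add_of_dvd_square:
  fixes m t N :: int
  assumes coprime: "coprime m N" and "N dvd t^2"
  shows "coprime (m + t) N"
proof (rule coprimeI)
  fix g assume g: "g dvd m + t" "g dvd N"
  have "g dvd (m + t) * (m - t)" using g(1) by (rule dvd_mult2)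
  moreover have "g dvd t^2" using g(2) assms(2) by (rule dvd_trans)
  ultimately have "g dvd (m + t) * (m - t) + t^2" by (rule dvd_add)
  then have "g dvd m^2" by (simp add: power2_eq_square algebra_simps)
  moreover have "coprime g m"
    using coprime_divisors[OF g(2) dvd_refl coprime_commute[THEN iffD1, OF coprime]] .
  ultimately show "is_unit g" using coprime_common_divisor[of g "m^2" g] by simp
qed

lemma sum_eq_0_of_twisted_shift:
  fixes N D s :: int and F :: "int \<Rightarrow> complex" and P :: "int \<Rightarrow> bool" and r :: "int \<Rightarrow> int"
  assumes N: "N > 0" and D: "D > 0"
    and P_shift: "\<And>m j. P m \<Longrightarrow> P ((m + j * s) mod N)"
    and periodic: "\<And>m. F (m mod N) = F m"
    and twist: "\<And>m j. P m \<Longrightarrow> F (m + j * s) = F m * ee (of_int (j * r m) / of_int D)"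
    and not_dvd: "\<And>m. P m \<Longrightarrow> \<not> D dvd r m"
  shows "(\<Sum>m\<in>{m\<in>{0..<N}. P m}. F m) = 0"
proof -
  define M where "M = {m\<in>{0..<N}. P m}"
  have twisted_sum: "(\<Sum>m\<in>M. F m) = (\<Sum>m\<in>M. F m * ee (of_int (j * r m) / of_int D))" for j :: int
  proof -
    have undo: "((m + i * s) mod N + (- i) * s) mod N = m" if "m \<in> M" for m i
    proof -
      have "((m + i * s) mod N + (- i) * s) mod N = m mod N" by (simp add: mod_diff_left_eq)
      then show ?thesis using that unfolding M_def by simp
    qed
    have "bij_betw (\<lambda>m. (m + j * s) mod N) M M"
    proof (rule bij_betw_byWitness[where f'="\<lambda>m. (m + (-j) * s) mod N"])
      show "(\<lambda>m. (m + j * s) mod N) ` M \<subseteq> M" "(\<lambda>m. (m + (-j) * s) mod N) ` M \<subseteq> M"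
        using N P_shift[of _ j] P_shift[of _ "-j"] unfolding M_def by auto
    qed (use undo[of _ j] undo[of _ "- j"] in auto)
    then have "(\<Sum>m\<in>M. F m) = (\<Sum>m\<in>M. F ((m + j * s) mod N))"
      by (rule sum.reindex_bij_betw[symmetric])
    also have "\<dots> = (\<Sum>m\<in>M. F m * ee (of_int (j * r m) / of_int D))"
      by (intro sum.cong) (auto simp: periodic twist M_def)
    finally show ?thesis .
  qed
  \<comment> \<open>averaging over the D shifts produces a complete sum of nontrivial D-th roots of unity\<close>
  have "of_nat (nat D) * (\<Sum>m\<in>M. F m) = (\<Sum>j<nat D. \<Sum>m\<in>M. F m)" by simp
  also have "\<dots> = (\<Sum>j<nat D. \<Sum>m\<in>M. F m * ee (of_int (int j * r m) / of_int D))"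
    by (intro sum.cong refl twisted_sum)
  also have "\<dots> = (\<Sum>m\<in>M. F m * (\<Sum>j<nat D. ee (of_nat j * of_int (r m) / of_nat (nat D))))"
    using D by (subst sum.swap) (simp add: sum_distrib_left)
  also have "\<dots> = 0"
  proof (intro sum.neutral ballI)
    fix m assume "m \<in> M"
    then have "\<not> int (nat D) dvd r m" using not_dvd D unfolding M_def by simp
    then show "F m * (\<Sum>j<nat D. ee (of_nat j * of_int (r m) / of_nat (nat D))) = 0"
      using D by (simp only: sum_roots_of_unity) simp
  qed
  finally show ?thesis using D unfolding M_def by simp
qed

lemma Ssum_eq_sum_Mset:
  assumes W: "W > 1" and q: "q > 0"
  shows "Ssum W b q a = 1 / of_nat (card (Hset W b)) * (\<Sum>m\<in>Mset W q b. Sterm W b q a m)"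
  using W q by (simp add: Ssum_eq_sum_Hset_Lset sum_Hset_Lset_eq_sum_Mset Sterm_mod)

lemma Mset_shift_closed:
  fixes W q b s j m :: int
  assumes W: "W > 1" and q: "q > 0" and "q * W dvd s^2" and "W dvd 2 * s"
    and m: "coprime m (q * W) \<and> [m^2 = b] (mod W)"
  shows "coprime ((m + j * s) mod (q * W)) (q * W) \<and> [((m + j * s) mod (q * W))^2 = b] (mod W)"
proof
  have "q * W dvd (j * s)^2" using assms(3) by (simp add: power_mult_distrib)
  then have "coprime (m + j * s) (q * W)" using m coprime_add_of_dvd_square by blast
  then show "coprime ((m + j * s) mod (q * W)) (q * W)"
    using q W by (subst coprime_mod_left_iff) auto
  have "[(m + j * s) mod (q * W) = m + j * s] (mod W)"
    by (simp add: cong_def mod_mod_cancel)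
  then have "[((m + j * s) mod (q * W))^2 = (m + j * s)^2] (mod W)" by (rule cong_pow)
  moreover have "W dvd s^2" using assms(3) by (rule dvd_mult_right)
  then have "W dvd (j * m) * (2 * s) + j^2 * s^2"
    using dvd_add[OF dvd_mult[OF assms(4), of "j * m"] dvd_mult[of W "s^2" "j^2"]] by blast
  then have "[(m + j * s)^2 = m^2] (mod W)"
    by (simp add: cong_iff_dvd_diff power2_eq_square algebra_simps)
  ultimately show "[((m + j * s) mod (q * W))^2 = b] (mod W)"
    using m by (meson cong_trans)
qed

lemma Sterm_shift:
  fixes W q b a s D k j m :: int
  assumes qW: "q * W > 0" and "q * W dvd s^2" and shift: "2 * s * D = q * W * k" and D: "D > 0"
  shows "Sterm W b q a (m + j * s) = Sterm W b q a m * ee (of_int (j * (k * m * a)) / of_int D)"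
proof -
  define N where "N = q * W"
  have N_pos: "N > 0" unfolding N_def by (rule qW)
  obtain u where u: "s^2 = N * u" using assms(2) unfolding N_def by auto
  define X Y Z where "X = ((m + j * s)^2 - b) * a" and "Y = (m^2 - b) * a" and "Z = j * (k * m * a)"
  have "X * D = Y * D + Z * N + N * D * (j^2 * a * u)"
    using shift u unfolding X_def Y_def Z_def N_def by (simp add: power2_eq_square algebra_simps)
  then have "real_of_int (X * D) = real_of_int (Y * D + Z * N + N * D * (j^2 * a * u))"
    by (rule arg_cong)
  then have arg: "real_of_int X / of_int N = of_int Y / of_int N + of_int Z / of_int D + of_int (j^2 * a * u)"
    using N_pos D by (simp add: field_simps)
  have "Sterm W b q a (m + j * s) = ee (of_int X / of_int N)" unfolding Sterm_def X_def N_def ..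
  also have "\<dots> = ee (of_int Y / of_int N) * ee (of_int Z / of_int D)"
    unfolding arg by (simp only: ee_add ee_of_int mult_1_right)
  also have "ee (of_int Y / of_int N) = Sterm W b q a m" unfolding Sterm_def Y_def N_def ..
  finally show ?thesis unfolding Z_def .
qed

lemma sum_Mset_Sterm_eq_0:
  fixes W q b a s D k :: int
  assumes W: "W > 1" and q: "q > 0" and "q * W dvd s^2" and "W dvd 2 * s"
    and "2 * s * D = q * W * k" and D: "D > 0"
    and not_dvd: "\<And>m. coprime m (q * W) \<Longrightarrow> \<not> D dvd k * m * a"
  shows "(\<Sum>m\<in>Mset W q b. Sterm W b q a m) = 0"
  unfolding Mset_def
proof (rule sum_eq_0_of_twisted_shift[where s=s and D=D and r="\<lambda>m. k * m * a"])
  have qW: "q * W > 0" using W q by simp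
  show "q * W > 0" "D > 0" using qW D by simp_all
  show "Sterm W b q a (m mod (q * W)) = Sterm W b q a m" for m
    using W q by (intro Sterm_mod) simp
  show "Sterm W b q a (m + j * s) = Sterm W b q a m * ee (of_int (j * (k * m * a)) / of_int D)" for m j
    by (rule Sterm_shift[OF qW assms(3,5) D])
  show "coprime ((m + j * s) mod (q * W)) (q * W) \<and> [((m + j * s) mod (q * W))^2 = b] (mod W)"
    if "coprime m (q * W) \<and> [m^2 = b] (mod W)" for m j
    by (rule Mset_shift_closed[OF W q assms(3,4) that])
  show "\<not> D dvd k * m * a" if "coprime m (q * W) \<and> [m^2 = b] (mod W)" for m
    using not_dvd that by simp
qed

lemma Ssum_eq_0_if_even:
  fixes W q b a :: int
  assumes W: "W > 1" and "8 dvd W" and q: "q > 0" and "even q" and coprime: "coprime a q"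
  shows "Ssum W b q a = 0"
proof -
  obtain q' w' where q': "q = 2 * q'" and w': "W = 8 * w'" using assms by (auto elim!: evenE dvdE)
  \<comment> \<open>shifting m by q W / 4 multiplies each term by e(m a / 2) = -1\<close>
  have "(\<Sum>m\<in>Mset W q b. Sterm W b q a m) = 0"
  proof (rule sum_Mset_Sterm_eq_0[OF W q, where s="4 * q' * w'" and D=2 and k=1])
    show "q * W dvd (4 * q' * w')^2" unfolding q' w'
      by (rule dvdI[where k="q' * w'"]) (simp add: power2_eq_square algebra_simps)
    show "W dvd 2 * (4 * q' * w')" unfolding w' by (rule dvdI[where k="q'"]) (simp add: algebra_simps)
    show "2 * (4 * q' * w') * 2 = q * W * 1" unfolding q' w' by simp
    show "\<not> 2 dvd 1 * m * a" if "coprime m (q * W)" for m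
    proof -
      have "odd m" using coprime_common_divisor[of m "q * W" 2] that \<open>even q\<close> by auto
      moreover have "odd a" using coprime_common_divisor[of a q 2] coprime \<open>even q\<close> by auto
      ultimately show ?thesis by simp
    qed
  qed simp
  then show ?thesis using W q by (simp add: Ssum_eq_sum_Mset)
qed

lemma Ssum_eq_0_if_odd_prime_dvd:
  fixes W q b a p :: int
  assumes W: "W > 1" and q: "q > 0" and p: "prime p" "odd p" "p dvd q" "p dvd W"
    and coprime: "coprime a q"
  shows "Ssum W b q a = 0"
proof -
  obtain q' w' where q': "q = p * q'" and w': "W = p * w'" using p by (auto elim!: dvdE)
  \<comment> \<open>shifting m by q W / p multiplies each term by the nontrivial p-th root of unity e(2 m a / p)\<close>
  have "(\<Sum>m\<in>Mset W q b. Sterm W b q a m) = 0"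
  proof (rule sum_Mset_Sterm_eq_0[OF W q, where s="q' * W" and D=p and k=2])
    show "q * W dvd (q' * W)^2" unfolding q'
      by (rule dvdI[where k="q' * w'"]) (simp add: power2_eq_square algebra_simps w')
    show "2 * (q' * W) * p = q * W * 2" unfolding q' by (simp add: algebra_simps)
    show "p > 0" using p(1) by (simp add: prime_gt_0_int)
    show "\<not> p dvd 2 * m * a" if "coprime m (q * W)" for m
    proof
      assume "p dvd 2 * m * a"
      moreover have "\<not> p dvd 2" using p(1,2) primes_dvd_imp_eq[of p 2] by auto
      moreover have "\<not> p dvd m"
        using coprime_common_divisor[of m "q * W" p] that p not_prime_unit by auto
      moreover have "\<not> p dvd a"
        using coprime_common_divisor[of a q p] coprime p not_prime_unit by auto
      ultimately show False using p(1) by (simp add: prime_dvd_mult_iff)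
    qed
  qed simp
  then show ?thesis using W q by (simp add: Ssum_eq_sum_Mset)
qed

lemma Ssum_eq_0_if_not_coprime:
  fixes W q b a :: int
  assumes W: "W > 1" and "8 dvd W" and q: "q > 0" and coprime: "coprime a q"
    and "\<not> coprime q W"
  shows "Ssum W b q a = 0"
proof (cases "even q")
  case True
  then show ?thesis using Ssum_eq_0_if_even assms by blast
next
  case False
  obtain d where d: "d dvd q" "d dvd W" "\<not> is_unit d"
    using \<open>\<not> coprime q W\<close> by (rule not_coprimeE)
  moreover have "d \<noteq> 0" using d(1) q by auto
  ultimately obtain p where "prime p" "p dvd q" "p dvd W"
    using prime_divisor_exists[of d] by (auto intro: dvd_trans)
  moreover have "odd p" using \<open>p dvd q\<close> False by (auto elim: dvd_trans)
  ultimately show ?thesis using Ssum_eq_0_if_odd_prime_dvd W q coprime by blast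
qed

section \<open>The bound when gcd(q, W) = 1\<close>

lemma Sterm_eq_unit_twist:
  fixes W q b a Wi y :: int
  assumes W: "W \<noteq> 0" and q: "q \<noteq> 0" and Wi: "[W * Wi = 1] (mod q)" and y: "[y^2 = b] (mod W)"
  shows "Sterm W b q a y = ee (of_int (a * Wi * ((y mod q)^2 - b)) / of_int q)"
proof -
  obtain K where K: "y^2 - b = W * K" using y by (auto simp: cong_iff_dvd_diff cong_sym_eq elim!: dvdE)
  have "Sterm W b q a y = ee (of_int (K * a) / of_int q)"
    unfolding Sterm_def K using W q by (simp add: field_simps)
  also have "\<dots> = ee (of_int (a * Wi * ((y mod q)^2 - b)) / of_int q)"
  proof (rule ee_cong[OF _ q])
    have "[a * Wi * ((y mod q)^2 - b) = a * Wi * (y^2 - b)] (mod q)"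
      by (intro cong_mult cong_diff cong_pow cong_refl) (simp add: cong_def)
    also have "a * Wi * (y^2 - b) = a * K * (W * Wi)" unfolding K by (simp add: algebra_simps)
    also have "[a * K * (W * Wi) = a * K * 1] (mod q)" using Wi by (intro cong_mult cong_refl)
    finally show "[K * a = a * Wi * ((y mod q)^2 - b)] (mod q)" by (simp add: cong_sym mult.commute)
  qed
  finally show ?thesis .
qed

lemma cong_affine_inverse:
  fixes W Wi q h x :: int
  assumes Wi: "[W * Wi = 1] (mod q)"
  shows "[W * ((Wi * (x - h) - 1) mod q + 1) + h = x] (mod q)"
proof -
  have "[(Wi * (x - h) - 1) mod q + 1 = Wi * (x - h)] (mod q)"
    unfolding cong_def by (metis diff_add_cancel mod_add_left_eq)
  then have "[W * ((Wi * (x - h) - 1) mod q + 1) + h = (W * Wi) * (x - h) + h] (mod q)"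
    by (metis cong_add_rcancel cong_scalar_left mult.assoc)
  also have "[(W * Wi) * (x - h) + h = 1 * (x - h) + h] (mod q)"
    using Wi by (intro cong_add cong_mult cong_refl)
  finally show ?thesis by simp
qed

lemma bij_betw_Lset_units:
  fixes W q Wi h :: int
  assumes W: "W > 0" and q: "q > 0" and Wi: "[W * Wi = 1] (mod q)" and h: "coprime h W"
  shows "bij_betw (\<lambda>l. (W * l + h) mod q) (Lset W q h) {x\<in>{0..<q}. coprime x q}"
proof (rule bij_betw_byWitness[where f'="\<lambda>x. (Wi * (x - h) - 1) mod q + 1"])
  note inverse = cong_affine_inverse[OF Wi]
  show "\<forall>l\<in>Lset W q h. (Wi * ((W * l + h) mod q - h) - 1) mod q + 1 = l"
  proof
    fix l assume "l \<in> Lset W q h"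
    then have l: "1 \<le> l" "l \<le> q" unfolding Lset_def by auto
    have "[(W * l + h) mod q - h = W * l] (mod q)" by (simp add: cong_def mod_diff_left_eq)
    then have "[Wi * ((W * l + h) mod q - h) = Wi * (W * l)] (mod q)" by (rule cong_scalar_left)
    also have "Wi * (W * l) = (W * Wi) * l" by (simp add: algebra_simps)
    also have "[(W * Wi) * l = 1 * l] (mod q)" using Wi by (intro cong_mult cong_refl)
    finally show "(Wi * ((W * l + h) mod q - h) - 1) mod q + 1 = l"
      using l by (intro shifted_mod_eq) simp_all
  qed
  show "\<forall>x\<in>{x\<in>{0..<q}. coprime x q}. (W * ((Wi * (x - h) - 1) mod q + 1) + h) mod q = x"
    using inverse by (auto simp: cong_def)
  show "(\<lambda>l. (W * l + h) mod q) ` Lset W q h \<subseteq> {x\<in>{0..<q}. coprime x q}"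
    using q by (auto simp: Lset_def coprime_iff_gcd_eq_1[symmetric])
  show "(\<lambda>x. (Wi * (x - h) - 1) mod q + 1) ` {x\<in>{0..<q}. coprime x q} \<subseteq> Lset W q h"
  proof
    fix l assume "l \<in> (\<lambda>x. (Wi * (x - h) - 1) mod q + 1) ` {x\<in>{0..<q}. coprime x q}"
    then obtain x where x: "0 \<le> x" "x < q" "coprime x q" and l: "l = (Wi * (x - h) - 1) mod q + 1"
      by auto
    have "1 \<le> l" "l \<le> q"
      unfolding l using pos_mod_bound[OF q, of "Wi * (x - h) - 1"] pos_mod_sign[OF q, of "Wi * (x - h) - 1"]
      by linarith+
    moreover have "coprime (W * l + h) q"
      using inverse[of x] x q unfolding l by (metis cong_def coprime_mod_left_iff mod_pos_pos_trivial
          less_irrefl)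
    moreover have "coprime (W * l + h) W"
      using h W by (metis coprime_mod_left_iff less_irrefl mod_mult_self3 mult.commute)
    ultimately show "l \<in> Lset W q h" by (simp add: Lset_def coprime_iff_gcd_eq_1[symmetric])
  qed
qed

lemma Ssum_eq_unit_sum:
  fixes W q b a Wi :: int
  assumes W: "W > 1" and q: "q > 0" and Wi: "[W * Wi = 1] (mod q)" and b: "b \<in> Zset W"
  shows "Ssum W b q a = (\<Sum>x\<in>{x\<in>{0..<q}. coprime x q}. ee (of_int (a * Wi * (x^2 - b)) / of_int q))"
    (is "_ = ?V")
proof -
  have inner: "(\<Sum>l\<in>Lset W q h. Sterm W b q a (W * l + h)) = ?V" if h: "h \<in> Hset W b" for h
  proof -
    have "[(W * l + h)^2 = b] (mod W)" for l
    proof -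
      have "[(W * l + h)^2 = h^2] (mod W)" by (intro cong_pow) (simp add: cong_def)
      then show ?thesis using Hset_memD(4)[OF W h] by (rule cong_trans)
    qed
    then have "(\<Sum>l\<in>Lset W q h. Sterm W b q a (W * l + h))
        = (\<Sum>l\<in>Lset W q h. ee (of_int (a * Wi * (((W * l + h) mod q)^2 - b)) / of_int q))"
      using W q Wi by (intro sum.cong refl Sterm_eq_unit_twist) auto
    also have "\<dots> = ?V"
      using bij_betw_Lset_units[OF _ q Wi Hset_memD(3)[OF W h]] W
      by (intro sum.reindex_bij_betw[of "\<lambda>l. (W * l + h) mod q"]) auto
    finally show ?thesis .
  qed
  have "card (Hset W b) \<noteq> 0" using finite_Hset Hset_nonempty[OF W b] by simp
  then show ?thesis
    using W q by (simp add: Ssum_eq_sum_Hset_Lset inner)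
qed

lemma norm_unit_sum_le:
  fixes q c b :: int
  assumes q: "q > 0" and odd: "odd q" and coprime: "coprime c q"
  shows "norm (\<Sum>x\<in>{x\<in>{0..<q}. coprime x q}. ee (of_int (c * (x^2 - b)) / of_int q))
           \<le> 2 ^ card {p. prime p \<and> p dvd nat q} * sqrt (of_int q)"
proof -
  define n where "n = nat q"
  have qn: "q = int n" unfolding n_def using q by simp
  have units: "{x\<in>{0..<q}. coprime x q} = int ` {x. x < n \<and> coprime x n}"
  proof (intro equalityI subsetI)
    fix x assume x: "x \<in> {x\<in>{0..<q}. coprime x q}"
    then have "nat x < n" "coprime (nat x) n" using qn by (auto simp flip: coprime_int_iff)
    moreover have "x = int (nat x)" using x by simp
    ultimately show "x \<in> int ` {x. x < n \<and> coprime x n}" by blast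
  qed (auto simp: qn coprime_int_iff)
  have "(\<Sum>x\<in>{x\<in>{0..<q}. coprime x q}. ee (of_int (c * (x^2 - b)) / of_int q))
      = ee (- (of_int (c * b) / of_int q)) * (\<Sum>x\<in>{x\<in>{0..<q}. coprime x q}. ee (of_int (c * x^2) / of_int q))"
    by (simp add: sum_distrib_left right_diff_distrib diff_divide_distrib flip: ee_add)
  then have "norm (\<Sum>x\<in>{x\<in>{0..<q}. coprime x q}. ee (of_int (c * (x^2 - b)) / of_int q))
      = norm (\<Sum>x\<in>{x\<in>{0..<q}. coprime x q}. ee (of_int (c * x^2) / of_int q))"
    by (simp add: norm_mult)
  also have "\<dots> = norm (\<Sum>x | x < n \<and> coprime x n. ee (of_int (c * int x ^ 2) / of_nat n))"
    unfolding units by (simp add: sum.reindex qn)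
  also have "\<dots> \<le> 2 ^ card {p. prime p \<and> p dvd n} * sqrt n"
    using q odd coprime unfolding qn by (intro norm_quadratic_sum_units_le) auto
  finally show ?thesis unfolding n_def using q by simp
qed

lemma norm_Ssum_le:
  fixes W q b a :: int
  assumes W: "W > 1" and "8 dvd W" and b: "b \<in> Zset W" and q: "q > 0" and "coprime a q"
  shows "norm (Ssum W b q a) \<le> 2 ^ card {p. prime p \<and> p dvd nat q} * sqrt (of_int q)"
proof (cases "coprime q W")
  case False
  then show ?thesis using Ssum_eq_0_if_not_coprime assms by simp
next
  case True
  then obtain Wi where Wi: "[W * Wi = 1] (mod q)"
    using cong_solve_coprime_int[of W q] by (auto simp: coprime_commute)
  have "odd q" using True \<open>8 dvd W\<close> coprime_common_divisor[of q W 2] by (auto elim: dvd_trans)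
  moreover have "coprime (a * Wi) q"
    using Wi \<open>coprime a q\<close> coprime_iff_invertible_int[of Wi q] by (auto simp: mult.commute)
  ultimately show ?thesis
    unfolding Ssum_eq_unit_sum[OF W q Wi b] by (rule norm_unit_sum_le[OF q])
qed

lemma norm_Ssum_le_powr:
  fixes \<epsilon> :: real
  assumes "\<epsilon> > 0"
  obtains C where "\<And>W b q a. W > 1 \<Longrightarrow> 8 dvd W \<Longrightarrow> b \<in> Zset W \<Longrightarrow> q > 0 \<Longrightarrow> coprime a q \<Longrightarrow>
      norm (Ssum W b q a) \<le> C * real_of_int q powr (1/2 + \<epsilon>)"
proof -
  obtain C where C: "C > 0"
    and omega: "\<And>q::nat. q > 0 \<Longrightarrow> 2 ^ card {p. prime p \<and> p dvd q} \<le> C * real q powr \<epsilon>"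
    using two_pow_card_prime_divisors_le[OF assms] by blast
  have "norm (Ssum W b q a) \<le> C * real_of_int q powr (1/2 + \<epsilon>)"
    if "W > 1" "8 dvd W" "b \<in> Zset W" "q > 0" "coprime a q" for W b q a
  proof -
    have "norm (Ssum W b q a) \<le> 2 ^ card {p. prime p \<and> p dvd nat q} * sqrt (of_int q)"
      using that by (rule norm_Ssum_le)
    also have "\<dots> \<le> C * real (nat q) powr \<epsilon> * sqrt (of_int q)"
      using omega[of "nat q"] \<open>q > 0\<close> by (intro mult_right_mono) auto
    also have "\<dots> = C * real_of_int q powr (1/2 + \<epsilon>)"
      using \<open>q > 0\<close> by (simp add: powr_add powr_half_sqrt)
    finally show ?thesis .
  qed
  then show ?thesis by (rule that)
qed

lemma WW_gt_1: "WW w > 1"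
  and eight_dvd_WW: "8 dvd WW w"
proof -
  have "(\<Prod>p\<in>{p::nat. prime p \<and> 2 < p \<and> real p < w}. int p) > 0"
    by (rule prod_pos) (auto simp: prime_gt_0_nat)
  then show "WW w > 1" "8 dvd WW w" unfolding WW_def by simp_all
qed

theorem corollary4p3:
  shows "(\<forall>\<epsilon>>0. \<exists>C::real. \<forall>(w::real) (b::int) (q::int) (a::int).
            w \<ge> 3 \<longrightarrow> b \<in> Zset (WW w) \<longrightarrow> q \<ge> 1 \<longrightarrow> coprime a q \<longrightarrow>
            norm (Ssum (WW w) b q a) \<le> C * real_of_int q powr (1/2 + \<epsilon>))
       \<and> (\<forall>(w::real) (b::int) (q::int) (a::int).
            w \<ge> 3 \<longrightarrow> b \<in> Zset (WW w) \<longrightarrow> q \<ge> 1 \<longrightarrow> coprime a q \<longrightarrow>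
            (\<not> gcd q (WW w) dvd 2 \<or> q = 2) \<longrightarrow> Ssum (WW w) b q a = 0)"
proof (intro conjI allI impI)
  fix \<epsilon> :: real assume "\<epsilon> > 0"
  obtain C where "\<And>W b q a. W > 1 \<Longrightarrow> 8 dvd W \<Longrightarrow> b \<in> Zset W \<Longrightarrow> q > 0 \<Longrightarrow> coprime a q \<Longrightarrow>
      norm (Ssum W b q a) \<le> C * real_of_int q powr (1/2 + \<epsilon>)"
    using norm_Ssum_le_powr[OF \<open>\<epsilon> > 0\<close>] by blast
  then show "\<exists>C::real. \<forall>w b q a. w \<ge> 3 \<longrightarrow> b \<in> Zset (WW w) \<longrightarrow> q \<ge> 1 \<longrightarrow> coprime a q \<longrightarrow>
            norm (Ssum (WW w) b q a) \<le> C * real_of_int q powr (1/2 + \<epsilon>)"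
    using WW_gt_1 eight_dvd_WW by (intro exI[of _ C] allI impI) auto
next
  fix w :: real and b q a :: int
  assume "b \<in> Zset (WW w)" "q \<ge> 1" "coprime a q" "\<not> gcd q (WW w) dvd 2 \<or> q = 2"
  moreover have "2 dvd WW w" using eight_dvd_WW[of w] by (rule dvd_trans[rotated]) simp
  ultimately have "\<not> coprime q (WW w)"
    using coprime_common_divisor[of 2 "WW w" 2] by (auto simp: coprime_iff_gcd_eq_1)
  then show "Ssum (WW w) b q a = 0"
    using WW_gt_1 eight_dvd_WW \<open>q \<ge> 1\<close> \<open>coprime a q\<close> by (intro Ssum_eq_0_if_not_coprime) auto
qed

end
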